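(* Let $1<v_0<n$ and let $(C,\mathfrak p,\mathfrak d)$ be a regular $q$-cycle coalgebra with $\mathfrak d=\mathfrak p$, $\mathfrak p_{10}^1=1$, $\mathfrak p_{1i}^1=0$ for $0<i<v_0$, and $\mathfrak p_{1,v_0}^1\ne0$. Then $\mathfrak p_{j0}^k=\delta_{kj}$ for all $j,k\in\{0,\dots,n-1\}$.
   Context: $K$ is an algebraically closed field of characteristic $0$ and $n\ge2$. $C$ is the coalgebra dual to $K[y]/\langle y^n\rangle$: basis $x_0,\dots,x_{n-1}$, $\Delta(x_i)=\sum_{j+k=i}x_j\otimes x_k$, $\epsilon(x_i)=\delta_{i0}$; $C\otimes C$ has the tensor product coalgebra structure; Sweedler notation $\Delta(b)=b_{(1)}\otimes b_{(2)}$. For linear maps $\mathfrak p,\mathfrak d\colon C\otimes C\to C$ write $a\cdot b=\mathfrak p(a\otimes b)$, $a:b=\mathfrak d(a\otimes b)$, $\mathfrak p(x_i\otimes x_j)=\sum_{k=0}^{n-1}\mathfrak p_{ij}^kx_k$, $\mathfrak d(x_i\otimes x_j)=\sum_{k=0}^{n-1}\mathfrak d_{ij}^kx_k$. A triple $(C,\mathfrak p,\mathfrak d)$ with $\mathfrak p,\mathfrak d$ coalgebra morphisms is a regular $q$-magma coalgebra if there are coalgebra morphisms $a\otimes b\mapsto a^b$, $a\otimes b\mapsto a_b$ from $C\otimes C$ to $C$ with $a^{b_{(1)}}\cdot b_{(2)}=(a\cdot b_{(1)})^{b_{(2)}}=\epsilon(b)a$ and $(a:b_{(2)})_{b_{(1)}}=a_{b_{(2)}}:b_{(1)}=\epsilon(b)a$.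 It is a regular $q$-cycle coalgebra if moreover for all $a,b,c$: (1) $(a\cdot b_{(1)})\cdot(c:b_{(2)})=(a\cdot c_{(2)})\cdot(b\cdot c_{(1)})$; (2) $(a\cdot b_{(1)}):(c\cdot b_{(2)})=(a:c_{(2)})\cdot(b:c_{(1)})$; (3) $(a:b_{(1)}):(c:b_{(2)})=(a:c_{(2)}):(b\cdot c_{(1)})$. *)

theory Defs
  imports "HOL-Computational_Algebra.Polynomial"
begin

text \<open>Coordinates: C has basis x_0..x_{n-1}.  A linear map f : C \<otimes> C \<rightarrow> C is given by
  its structure constants f i j k = f_{ij}^k, i.e. f(x_i \<otimes> x_j) = \<Sum>_{k<n} f_{ij}^k x_k.
  All conditions are linear (resp. multilinear) in their arguments, so they are stated on
  basis elements.  Delta(x_i) = \<Sum>_{s+t=i} x_s \<otimes> x_t, eps(x_i) = delta_{i0}.\<close>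

definition alg_closed_type :: "'a::field itself \<Rightarrow> bool" where
  "alg_closed_type _ \<longleftrightarrow> (\<forall>q :: 'a poly. degree q > 0 \<longrightarrow> (\<exists>x. poly q x = 0))"

definition kdelta :: "nat \<Rightarrow> nat \<Rightarrow> 'a::field" where
  "kdelta i j = (if i = j then 1 else 0)"

text \<open>f : C \<otimes> C \<rightarrow> C is a coalgebra morphism (C \<otimes> C with tensor product coalgebra
  structure): Delta(f(x_i \<otimes> x_j)) = (f \<otimes> f)(Delta(x_i \<otimes> x_j)) and eps(f(x_i \<otimes> x_j)) = eps(x_i)eps(x_j),
  compared coefficientwise at x_u \<otimes> x_v.\<close>
definition coalg_morph2 :: "nat \<Rightarrow> (nat \<Rightarrow> nat \<Rightarrow> nat \<Rightarrow> 'a::field) \<Rightarrow> bool" where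
  "coalg_morph2 n f \<longleftrightarrow>
     (\<forall>i<n. \<forall>j<n. \<forall>u<n. \<forall>v<n.
        (if u + v < n then f i j (u + v) else 0) =
        (\<Sum>a\<le>i. \<Sum>c\<le>j. f a c u * f (i - a) (j - c) v)) \<and>
     (\<forall>i<n. \<forall>j<n. f i j 0 = kdelta i 0 * kdelta j 0)"

text \<open>Regular q-magma coalgebra.  L i j k = coefficients of x_i^{x_j},
  R i j k = coefficients of (x_i)_{x_j}.\<close>
definition regular_q_magma_coalg ::
  "nat \<Rightarrow> (nat \<Rightarrow> nat \<Rightarrow> nat \<Rightarrow> 'a::field) \<Rightarrow> (nat \<Rightarrow> nat \<Rightarrow> nat \<Rightarrow> 'a) \<Rightarrow> bool" where
  "regular_q_magma_coalg n p d \<longleftrightarrow>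
     coalg_morph2 n p \<and> coalg_morph2 n d \<and>
     (\<exists>L R. coalg_morph2 n L \<and> coalg_morph2 n R \<and>
       (\<forall>i<n. \<forall>j<n. \<forall>k<n.
          \<comment> \<open>a^{b_(1)} . b_(2) = eps(b) a\<close>
          (\<Sum>s\<le>j. \<Sum>m<n. L i s m * p m (j - s) k) = kdelta j 0 * kdelta i k \<and>
          \<comment> \<open>(a . b_(1))^{b_(2)} = eps(b) a\<close>
          (\<Sum>s\<le>j. \<Sum>m<n. p i s m * L m (j - s) k) = kdelta j 0 * kdelta i k \<and>
          \<comment> \<open>(a : b_(2))_{b_(1)} = eps(b) a\<close>
          (\<Sum>s\<le>j. \<Sum>m<n. d i (j - s) m * R m s k) = kdelta j 0 * kdelta i k \<and>
          \<comment> \<open>a_{b_(2)} : b_(1) = eps(b) a\<close>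
          (\<Sum>s\<le>j. \<Sum>m<n. R i (j - s) m * d m s k) = kdelta j 0 * kdelta i k))"

definition regular_q_cycle_coalg ::
  "nat \<Rightarrow> (nat \<Rightarrow> nat \<Rightarrow> nat \<Rightarrow> 'a::field) \<Rightarrow> (nat \<Rightarrow> nat \<Rightarrow> nat \<Rightarrow> 'a) \<Rightarrow> bool" where
  "regular_q_cycle_coalg n p d \<longleftrightarrow>
     regular_q_magma_coalg n p d \<and>
     (\<forall>i<n. \<forall>j<n. \<forall>l<n. \<forall>k<n.
        \<comment> \<open>(1) (a . b_(1)) . (c : b_(2)) = (a . c_(2)) . (b . c_(1))\<close>
        (\<Sum>s\<le>j. \<Sum>m<n. \<Sum>m'<n. p i s m * d l (j - s) m' * p m m' k) =
        (\<Sum>s\<le>l. \<Sum>m<n. \<Sum>m'<n. p i (l - s) m * p j s m' * p m m' k) \<and>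
        \<comment> \<open>(2) (a . b_(1)) : (c . b_(2)) = (a : c_(2)) . (b : c_(1))\<close>
        (\<Sum>s\<le>j. \<Sum>m<n. \<Sum>m'<n. p i s m * p l (j - s) m' * d m m' k) =
        (\<Sum>s\<le>l. \<Sum>m<n. \<Sum>m'<n. d i (l - s) m * d j s m' * p m m' k) \<and>
        \<comment> \<open>(3) (a : b_(1)) : (c : b_(2)) = (a : c_(2)) : (b . c_(1))\<close>
        (\<Sum>s\<le>j. \<Sum>m<n. \<Sum>m'<n. d i s m * d l (j - s) m' * d m m' k) =
        (\<Sum>s\<le>l. \<Sum>m<n. \<Sum>m'<n. d i (l - s) m * p j s m' * d m m' k))"

end

theory Submission
  imports Defs
begin

(* Dually, p is the algebra map K[y]/(y^n) -> K[X,Y]/(X^n,Y^n) sending y to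
   f = sum p_{ac}^1 X^a Y^c, so p i j m is the coefficient of X^i Y^j in f^m, and f^n = 0.
   Each step compares lowest-order terms of powers of f.  Nilpotency forces f(0,0) = 0 and,
   as f = X + ..., excludes pure Y-terms: the lowest one, c Y^t, would give the coefficient
   n c of X^(n-1) Y^t in f^n.  Reading axiom (1) with d = p at the coefficient of x_1 on
   suitable low-degree monomials shows, by induction on the degree, that f has no mixed terms
   of degree at most v0, and then that a lowest pure X-term c X^r with r > 1 would force
   (r - 1) p_{1 v0}^1 = 0.  Hence f(X,0) = X, and p_{j0}^k, the coefficient of X^j in X^k,
   is delta_{jk}. *)

lemma sum_eq_sum_over_support:
  assumes "finite A" "S \<subseteq> A" "\<And>x. x \<in> A \<Longrightarrow> g x \<noteq> 0 \<Longrightarrow> x \<in> S"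
  shows "sum g A = sum g S"
  using assms by (intro sum.mono_neutral_right) auto

lemma sum_prod3_eq_sum_over_support:
  fixes f g h :: "nat \<Rightarrow> nat \<Rightarrow> 'a::semiring_0"
  assumes "finite A" "S \<subseteq> A"
    and "\<And>s m m'. (s, m, m') \<in> A \<Longrightarrow> f s m \<noteq> 0 \<Longrightarrow> g s m' \<noteq> 0 \<Longrightarrow> h m m' \<noteq> 0 \<Longrightarrow>
      (s, m, m') \<in> S"
  shows "(\<Sum>(s, m, m')\<in>A. f s m * g s m' * h m m') = (\<Sum>(s, m, m')\<in>S. f s m * g s m' * h m m')"
proof (rule sum_eq_sum_over_support)
  fix x
  assume "x \<in> A" "(\<lambda>(s, m, m'). f s m * g s m' * h m m') x \<noteq> 0"
  then show "x \<in> S" by (cases x) (auto intro: assms(3))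
qed (use assms in auto)

locale coalg_morph_coeffs =
  fixes p :: "nat \<Rightarrow> nat \<Rightarrow> nat \<Rightarrow> 'a::field" and n :: nat
  assumes coalg_morph: "coalg_morph2 n p" and two_le_n: "2 \<le> n"
begin

definition mult_f_coeff :: "nat \<Rightarrow> nat \<Rightarrow> nat \<Rightarrow> 'a" where
  "mult_f_coeff i j m = (\<Sum>(a, c)\<in>{..i} \<times> {..j}. p a c 1 * p (i - a) (j - c) m)"

lemma coeff_0: "i < n \<Longrightarrow> j < n \<Longrightarrow> p i j 0 = (if i = 0 \<and> j = 0 then 1 else 0)"
  using coalg_morph unfolding coalg_morph2_def kdelta_def by auto

lemma mult_f_coeff_eq:
  assumes "i < n" "j < n" "m < n"
  shows "mult_f_coeff i j m = (if Suc m < n then p i j (Suc m) else 0)"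
proof -
  have "1 < n" using two_le_n by simp
  then have "(if 1 + m < n then p i j (1 + m) else 0) =
      (\<Sum>a\<le>i. \<Sum>c\<le>j. p a c 1 * p (i - a) (j - c) m)"
    using coalg_morph assms unfolding coalg_morph2_def by blast
  then show ?thesis
    unfolding mult_f_coeff_def sum.cartesian_product plus_1_eq_Suc by simp
qed

lemma coeff_Suc: "i < n \<Longrightarrow> j < n \<Longrightarrow> Suc m < n \<Longrightarrow> p i j (Suc m) = mult_f_coeff i j m"
  by (simp add: mult_f_coeff_eq)

lemma mult_f_coeff_last: "i < n \<Longrightarrow> j < n \<Longrightarrow> mult_f_coeff i j (n - 1) = 0"
  using two_le_n by (simp add: mult_f_coeff_eq)

lemma mult_f_coeff_eq_sum_over_support:
  assumes "S \<subseteq> {..i} \<times> {..j}"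
    and "\<And>a c. a \<le> i \<Longrightarrow> c \<le> j \<Longrightarrow> p a c 1 \<noteq> 0 \<Longrightarrow> p (i - a) (j - c) m \<noteq> 0 \<Longrightarrow> (a, c) \<in> S"
  shows "mult_f_coeff i j m = (\<Sum>(a, c)\<in>S. p a c 1 * p (i - a) (j - c) m)"
  unfolding mult_f_coeff_def using assms by (intro sum_eq_sum_over_support) auto

text \<open>The support of f^m lies in the m-fold sumset of the support of f.\<close>

lemma coeff_support_induct:
  assumes "p i j m \<noteq> 0" "i < n" "j < n" "m < n"
    and base: "Q 0 0 0"
    and step: "\<And>a c i j m. a < n \<Longrightarrow> c < n \<Longrightarrow> p a c 1 \<noteq> 0 \<Longrightarrow> Q i j m \<Longrightarrow>
      Q (a + i) (c + j) (Suc m)"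
  shows "Q i j m"
  using assms(1-4)
proof (induction m arbitrary: i j)
  case 0
  then have "i = 0" "j = 0" using coeff_0[of i j] by (simp_all split: if_splits)
  then show ?case using base by simp
next
  case (Suc m)
  then have "mult_f_coeff i j m \<noteq> 0" by (simp add: coeff_Suc)
  then obtain x where "x \<in> {..i} \<times> {..j}" "(\<lambda>(a, c). p a c 1 * p (i - a) (j - c) m) x \<noteq> 0"
    unfolding mult_f_coeff_def by (rule sum.not_neutral_contains_not_neutral)
  then obtain a c where ac: "a \<le> i" "c \<le> j" and "p a c 1 \<noteq> 0" "p (i - a) (j - c) m \<noteq> 0"
    by auto
  moreover have "Q (i - a) (j - c) m"
    using Suc.IH[OF \<open>p (i - a) (j - c) m \<noteq> 0\<close>] Suc.prems by simp
  ultimately have "Q (a + (i - a)) (c + (j - c)) (Suc m)" using Suc.prems by (intro step) auto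
  then show ?case using ac by simp
qed

lemma coeff_00_power: "m < n \<Longrightarrow> p 0 0 m = p 0 0 1 ^ m"
proof (induction m)
  case 0
  then show ?case by (simp add: coeff_0)
next
  case (Suc m)
  have "p 0 0 (Suc m) = mult_f_coeff 0 0 m" using Suc.prems by (intro coeff_Suc) auto
  also have "\<dots> = p 0 0 1 * p 0 0 m" by (simp add: mult_f_coeff_def)
  finally show ?case using Suc by simp
qed

lemma coeff_00: "p 0 0 1 = 0"
proof -
  have "p 0 0 1 ^ n = p 0 0 1 * p 0 0 (n - 1)"
    using two_le_n coeff_00_power[of "n - 1"] by (simp flip: power_Suc)
  also have "\<dots> = mult_f_coeff 0 0 (n - 1)" by (simp add: mult_f_coeff_def)
  also have "\<dots> = 0" using two_le_n by (intro mult_f_coeff_last) auto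
  finally show ?thesis by simp
qed

lemma coeff_below_diag:
  assumes "i < m" "i < n" "m < n"
  shows "p i 0 m = 0"
proof -
  have "j = 0 \<longrightarrow> m \<le> i" if "p i j m \<noteq> 0" "i < n" "j < n" "m < n" for i j m
    using that
  proof (rule coeff_support_induct[where Q = "\<lambda>i j m. j = 0 \<longrightarrow> m \<le> i"])
    fix a c i j m :: nat
    assume "a < n" "c < n" "p a c 1 \<noteq> 0" "j = 0 \<longrightarrow> m \<le> i"
    then show "c + j = 0 \<longrightarrow> Suc m \<le> a + i" using coeff_00 by (cases a) auto
  qed simp
  then show ?thesis using assms two_le_n by fastforce
qed

lemma coeff_nonzero_imp_lowest_y:
  assumes "1 \<le> t" "\<forall>y<t. p 0 y 1 = 0"
    and "p i j m \<noteq> 0" "i < n" "j < n" "m < n"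
  shows "(j < t \<longrightarrow> m \<le> i) \<and> (j \<le> t \<longrightarrow> m \<le> i + 1)"
  using assms(3-)
proof (rule coeff_support_induct[where Q = "\<lambda>i j m. (j < t \<longrightarrow> m \<le> i) \<and> (j \<le> t \<longrightarrow> m \<le> i + 1)"])
  fix a c i j m :: nat
  assume "a < n" "c < n" "p a c 1 \<noteq> 0" "(j < t \<longrightarrow> m \<le> i) \<and> (j \<le> t \<longrightarrow> m \<le> i + 1)"
  moreover have "a = 0 \<Longrightarrow> t \<le> c" using assms(2) \<open>p a c 1 \<noteq> 0\<close> leI by blast
  ultimately show "(c + j < t \<longrightarrow> Suc m \<le> a + i) \<and> (c + j \<le> t \<longrightarrow> Suc m \<le> a + i + 1)"
    using assms(1) by (cases "a = 0") auto
qed simp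

lemma x_coeff_nonzero_imp:
  assumes "1 \<le> r" "\<And>k. 1 < k \<Longrightarrow> k < r \<Longrightarrow> k < n \<Longrightarrow> p k 0 1 = 0"
    and "p i 0 m \<noteq> 0" "i < n" "m < n"
  shows "i = m \<or> m + r \<le> i + 1"
proof -
  have "j = 0 \<longrightarrow> i = m \<or> m + r \<le> i + 1" if "p i j m \<noteq> 0" "i < n" "j < n" "m < n" for i j m
    using that
  proof (rule coeff_support_induct[where Q = "\<lambda>i j m. j = 0 \<longrightarrow> i = m \<or> m + r \<le> i + 1"])
    fix a c i j m :: nat
    assume "a < n" "c < n" "p a c 1 \<noteq> 0" "j = 0 \<longrightarrow> i = m \<or> m + r \<le> i + 1"
    moreover have "a = 1 \<or> r \<le> a" if "c = 0"
    proof (rule ccontr)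
      assume "\<not> (a = 1 \<or> r \<le> a)"
      moreover have "a \<noteq> 0" using coeff_00 \<open>c = 0\<close> \<open>p a c 1 \<noteq> 0\<close> by (cases a) auto
      ultimately have "1 < a" "a < r" by auto
      then show False using assms(2)[of a] \<open>a < n\<close> \<open>c = 0\<close> \<open>p a c 1 \<noteq> 0\<close> by simp
    qed
    ultimately show "c + j = 0 \<longrightarrow> a + i = Suc m \<or> Suc m + r \<le> a + i + 1"
      using assms(1) by auto
  qed simp
  then show ?thesis using assms(3-) two_le_n by fastforce
qed

end

locale normalized_coalg_morph = coalg_morph_coeffs p n
  for p :: "nat \<Rightarrow> nat \<Rightarrow> nat \<Rightarrow> 'a::field_char_0" and n +
  assumes x_coeff_1: "p 1 0 1 = 1"
begin

lemma coeff_diag: "m < n \<Longrightarrow> p m 0 m = 1"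
proof (induction m)
  case 0
  then show ?case by (simp add: coeff_0)
next
  case (Suc m)
  have "p (Suc m) 0 (Suc m) = mult_f_coeff (Suc m) 0 m" using Suc.prems by (intro coeff_Suc) auto
  also have "\<dots> = (\<Sum>(a, c)\<in>{(1, 0)}. p a c 1 * p (Suc m - a) (0 - c) m)"
  proof (rule mult_f_coeff_eq_sum_over_support)
    fix a c
    assume "a \<le> Suc m" "c \<le> 0" "p a c 1 \<noteq> 0" "p (Suc m - a) (0 - c) m \<noteq> 0"
    moreover have "a \<noteq> 0" using coeff_00 \<open>c \<le> 0\<close> \<open>p a c 1 \<noteq> 0\<close> by (cases a) auto
    moreover have "\<not> 2 \<le> a"
    proof
      assume "2 \<le> a"
      then have "Suc m - a < m" using \<open>a \<le> Suc m\<close> by linarith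
      then show False
        using coeff_below_diag[of "Suc m - a" m] Suc.prems \<open>c \<le> 0\<close> \<open>p (Suc m - a) (0 - c) m \<noteq> 0\<close>
        by simp
    qed
    ultimately show "(a, c) \<in> {(1, 0)}" by auto
  qed simp
  also have "\<dots> = 1" using Suc x_coeff_1 by simp
  finally show ?case .
qed

lemma mult_f_coeff_lowest_y:
  assumes "1 \<le> t" "t < n" "\<forall>y<t. p 0 y 1 = 0" "1 \<le> m" "m < n"
  shows "mult_f_coeff m t m = p (m - 1) t m + p 0 t 1"
proof -
  have "mult_f_coeff m t m = (\<Sum>(a, c)\<in>{(1, 0), (0, t)}. p a c 1 * p (m - a) (t - c) m)"
  proof (rule mult_f_coeff_eq_sum_over_support)
    show "{(1, 0), (0, t)} \<subseteq> {..m} \<times> {..t}" using assms by auto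
  next
    fix a c
    assume ac: "a \<le> m" "c \<le> t" "p a c 1 \<noteq> 0" "p (m - a) (t - c) m \<noteq> 0"
    have "a = 0 \<Longrightarrow> t \<le> c" using assms(3) ac(3) leI by blast
    moreover have "(t - c < t \<longrightarrow> m \<le> m - a) \<and> (t - c \<le> t \<longrightarrow> m \<le> m - a + 1)"
      using coeff_nonzero_imp_lowest_y[OF assms(1,3) ac(4)] ac assms by auto
    ultimately show "(a, c) \<in> {(1, 0), (0, t)}" using ac assms(1) by (cases "a = 0") auto
  qed
  also have "\<dots> = p (m - 1) t m + p 0 t 1" using assms coeff_diag x_coeff_1 by simp
  finally show ?thesis .
qed

lemma coeff_lowest_y_leading:
  assumes "1 \<le> t" "t < n" "\<forall>y<t. p 0 y 1 = 0"
  shows "Suc m < n \<Longrightarrow> p m t (Suc m) = of_nat (Suc m) * p 0 t 1"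
proof (induction m)
  case 0
  show ?case by simp
next
  case (Suc m)
  have "p (Suc m) t (Suc (Suc m)) = mult_f_coeff (Suc m) t (Suc m)"
    using Suc.prems assms by (intro coeff_Suc) auto
  also have "\<dots> = p m t (Suc m) + p 0 t 1"
    using mult_f_coeff_lowest_y[OF assms, of "Suc m"] Suc.prems by simp
  also have "\<dots> = of_nat (Suc (Suc m)) * p 0 t 1" using Suc by (simp add: algebra_simps)
  finally show ?case .
qed

lemma lowest_y_coeff_eq_0:
  assumes "1 \<le> t" "t < n" "\<forall>y<t. p 0 y 1 = 0"
  shows "p 0 t 1 = 0"
proof -
  obtain k where n: "n = Suc (Suc k)" using two_le_n by (metis add_2_eq_Suc le_Suc_ex)
  have "0 = mult_f_coeff (Suc k) t (Suc k)" using mult_f_coeff_last[of "Suc k" t] assms n by simp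
  also have "\<dots> = p k t (Suc k) + p 0 t 1" using mult_f_coeff_lowest_y[OF assms, of "Suc k"] n by simp
  also have "\<dots> = of_nat n * p 0 t 1"
    using coeff_lowest_y_leading[OF assms, of k] n by (simp add: algebra_simps)
  finally show ?thesis using two_le_n by simp
qed

lemma y_coeff_eq_0: "y < n \<Longrightarrow> p 0 y 1 = 0"
proof (induction y rule: less_induct)
  case (less y)
  then show ?case using coeff_00 lowest_y_coeff_eq_0[of y] by (cases "y = 0") auto
qed

definition mixed_order_ge :: "nat \<Rightarrow> bool" where
  "mixed_order_ge D \<longleftrightarrow>
    (\<forall>x y. 1 \<le> x \<longrightarrow> 1 \<le> y \<longrightarrow> x + y < D \<longrightarrow> x < n \<longrightarrow> y < n \<longrightarrow> p x y 1 = 0)"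

lemma coeff_nonzero_imp_mixed_order:
  assumes "mixed_order_ge D" "p i j m \<noteq> 0" "i < n" "j < n" "m < n"
  shows "(m = 0 \<longrightarrow> i = 0 \<and> j = 0) \<and> (j = 0 \<longrightarrow> m \<le> i) \<and>
    (1 \<le> j \<longrightarrow> D + m \<le> i + j + 1) \<and> (1 \<le> m \<longrightarrow> 1 \<le> i)"
  using assms(2-)
proof (rule coeff_support_induct[where Q = "\<lambda>i j m. (m = 0 \<longrightarrow> i = 0 \<and> j = 0) \<and>
    (j = 0 \<longrightarrow> m \<le> i) \<and> (1 \<le> j \<longrightarrow> D + m \<le> i + j + 1) \<and> (1 \<le> m \<longrightarrow> 1 \<le> i)"])
  fix a c i j m :: nat
  assume "a < n" "c < n" "p a c 1 \<noteq> 0"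
    and Q: "(m = 0 \<longrightarrow> i = 0 \<and> j = 0) \<and> (j = 0 \<longrightarrow> m \<le> i) \<and>
      (1 \<le> j \<longrightarrow> D + m \<le> i + j + 1) \<and> (1 \<le> m \<longrightarrow> 1 \<le> i)"
  have "1 \<le> a" using y_coeff_eq_0[of c] \<open>c < n\<close> \<open>p a c 1 \<noteq> 0\<close> by (cases a) auto
  moreover have "D \<le> a + c" if "1 \<le> c"
    using assms(1) \<open>1 \<le> a\<close> that \<open>a < n\<close> \<open>c < n\<close> \<open>p a c 1 \<noteq> 0\<close>
    unfolding mixed_order_ge_def by (meson not_le)
  ultimately show "(Suc m = 0 \<longrightarrow> a + i = 0 \<and> c + j = 0) \<and> (c + j = 0 \<longrightarrow> Suc m \<le> a + i) \<and>
    (1 \<le> c + j \<longrightarrow> D + Suc m \<le> a + i + (c + j) + 1) \<and> (1 \<le> Suc m \<longrightarrow> 1 \<le> a + i)"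
    using Q by (cases "c = 0") auto
qed simp

lemma mult_f_coeff_mixed_leading:
  assumes "mixed_order_ge D" "2 \<le> D" "1 \<le> t" "t < n"
    and "1 \<le> i" "i < n" "m < n" "i + t = D + m"
  shows "mult_f_coeff i t m = p (i - 1) t m + p (i - m) t 1"
proof -
  note constraints = coeff_nonzero_imp_mixed_order[OF assms(1)]
  have "1 < n" using two_le_n by simp
  have "mult_f_coeff i t m = (\<Sum>(a, c)\<in>{(1, 0), (i - m, t)}. p a c 1 * p (i - a) (t - c) m)"
  proof (rule mult_f_coeff_eq_sum_over_support)
    show "{(1, 0), (i - m, t)} \<subseteq> {..i} \<times> {..t}" using assms(5) by auto
  next
    fix a c
    assume ac: "a \<le> i" "c \<le> t" "p a c 1 \<noteq> 0" "p (i - a) (t - c) m \<noteq> 0"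
    have bounds: "a < n" "c < n" "i - a < n" "t - c < n"
      using ac assms(4,6) by auto
    have a: "1 \<le> a" and c: "1 \<le> c \<Longrightarrow> D \<le> a + c"
      using constraints[OF ac(3) bounds(1,2) \<open>1 < n\<close>] by auto
    have ct: "c = t \<Longrightarrow> m \<le> i - a" "c < t \<Longrightarrow> D + m \<le> i - a + (t - c) + 1"
      using constraints[OF ac(4) bounds(3,4) assms(7)] ac(2) by auto
    show "(a, c) \<in> {(1, 0), (i - m, t)}"
    proof (cases "c = 0")
      case True
      then show ?thesis using ct(2) a ac(1) assms(3,8) by simp
    next
      case False
      then have "c = t" using ct(2) a c ac assms(2,8) by linarith
      then have "a = i - m" using ct(1) c ac(1) assms(3,8) by linarith
      then show ?thesis using \<open>c = t\<close> by simp
    qed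
  qed
  also have "\<dots> = p (i - 1) t m + p (i - m) t 1 * p (i - (i - m)) 0 m"
    using assms(3) x_coeff_1 by simp
  also have "p (i - m) t 1 * p (i - (i - m)) 0 m = p (i - m) t 1"
  proof (cases "m \<le> i")
    case True
    then show ?thesis using coeff_diag assms(7) by simp
  next
    case False
    then show ?thesis using y_coeff_eq_0 assms(4) by simp
  qed
  finally show ?thesis .
qed

lemma coeff_mixed_leading:
  assumes "mixed_order_ge D" "2 \<le> D" "1 \<le> t" "t < n"
  shows "i + t + 1 = D + m \<Longrightarrow> i < n \<Longrightarrow> m < n \<Longrightarrow> p i t m = of_nat m * p (i + 1 - m) t 1"
proof (induction m arbitrary: i)
  case 0
  then show ?case using coeff_0 assms by simp
next
  case (Suc m)
  show ?case
  proof (cases "i = 0")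
    case True
    have "p i t (Suc m) = 0"
    proof (rule ccontr)
      assume "p i t (Suc m) \<noteq> 0"
      from coeff_nonzero_imp_mixed_order[OF assms(1) this Suc.prems(2) assms(4) Suc.prems(3)]
      show False using True by simp
    qed
    then show ?thesis using True y_coeff_eq_0 assms by simp
  next
    case False
    have "p i t (Suc m) = mult_f_coeff i t m" using Suc.prems assms by (intro coeff_Suc) auto
    also have "\<dots> = p (i - 1) t m + p (i - m) t 1"
      using mult_f_coeff_mixed_leading[OF assms] False Suc.prems by simp
    also have "p (i - 1) t m = of_nat m * p (i - m) t 1"
      using Suc.IH[of "i - 1"] Suc.prems False by simp
    finally show ?thesis by (simp add: algebra_simps)
  qed
qed

lemma x_coeff_leading:
  assumes "2 \<le> r" "\<And>k. 1 < k \<Longrightarrow> k < r \<Longrightarrow> k < n \<Longrightarrow> p k 0 1 = 0"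
  shows "i + 1 = m + r \<Longrightarrow> i < n \<Longrightarrow> m < n \<Longrightarrow> p i 0 m = of_nat m * p r 0 1"
proof (induction m arbitrary: i)
  case 0
  then show ?case using coeff_0 assms(1) by simp
next
  case (Suc m)
  have "p i 0 (Suc m) = mult_f_coeff i 0 m" using Suc.prems two_le_n by (intro coeff_Suc) auto
  also have "\<dots> = (\<Sum>(a, c)\<in>{(1, 0), (r, 0)}. p a c 1 * p (i - a) (0 - c) m)"
  proof (rule mult_f_coeff_eq_sum_over_support)
    show "{(1, 0), (r, 0)} \<subseteq> {..i} \<times> {..0::nat}" using Suc.prems assms(1) by auto
  next
    fix a c
    assume ac: "a \<le> i" "c \<le> 0" "p a c 1 \<noteq> 0" "p (i - a) (0 - c) m \<noteq> 0"
    have "a = 1 \<or> 1 + r \<le> a + 1"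
      using x_coeff_nonzero_imp[of r a 1, OF _ assms(2)] ac Suc.prems assms(1) two_le_n by simp
    moreover have "i - a = m \<or> m + r \<le> i - a + 1"
      using x_coeff_nonzero_imp[of r "i - a" m, OF _ assms(2)] ac Suc.prems assms(1) by simp
    ultimately show "(a, c) \<in> {(1, 0), (r, 0)}" using ac(1,2) Suc.prems(1) assms(1) by auto
  qed
  also have "\<dots> = p (i - 1) 0 m + p r 0 1 * p (i - r) 0 m" using x_coeff_1 assms(1) by simp
  also have "p (i - 1) 0 m = of_nat m * p r 0 1" using Suc.IH[of "i - 1"] Suc.prems assms(1) by simp
  also have "p (i - r) 0 m = 1" using coeff_diag Suc.prems by simp
  finally show ?case by (simp add: algebra_simps)
qed

lemma x_coeffs_trivial:
  assumes "\<And>k. 1 < k \<Longrightarrow> k < n \<Longrightarrow> p k 0 1 = 0" "i < n" "m < n"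
  shows "p i 0 m = (if i = m then 1 else 0)"
proof (cases "i = m")
  case True
  then show ?thesis using coeff_diag assms by simp
next
  case False
  have "p i 0 m = 0"
  proof (rule ccontr)
    assume "p i 0 m \<noteq> 0"
    then have "m + n \<le> i + 1" using x_coeff_nonzero_imp[of n i m] assms False two_le_n by auto
    then have "m = 0" "i \<noteq> 0" using assms(2) False by auto
    then show False using \<open>p i 0 m \<noteq> 0\<close> coeff_0 assms(2) two_le_n by simp
  qed
  then show ?thesis using False by simp
qed

end

text \<open>Axiom (1) with d = p, compared at the coefficient of x_1.\<close>

locale q_cycle_coeffs = normalized_coalg_morph +
  assumes cycle_identity:
    "\<And>i j l. i < n \<Longrightarrow> j < n \<Longrightarrow> l < n \<Longrightarrow>
      (\<Sum>(s, m, m')\<in>{..j} \<times> {..<n} \<times> {..<n}. p i s m * p l (j - s) m' * p m m' 1) =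
      (\<Sum>(s, m, m')\<in>{..l} \<times> {..<n} \<times> {..<n}. p i (l - s) m * p j s m' * p m m' 1)"
begin

context
  fixes D k j :: nat
  assumes mixed: "mixed_order_ge D" and k: "1 \<le> k" and j: "1 \<le> j" and D: "k + j = D" "D \<le> n"
begin

lemma cycle_mixed_lhs_support:
  assumes "s \<le> j" "m < n" "m' < n"
    and F: "p k s m \<noteq> 0" "p (D - 1) (j - s) m' \<noteq> 0" "p m m' 1 \<noteq> 0"
  shows "(s, m, m') \<in> {(j, 1, D - 1), (0, k, j)}"
proof -
  note constraints = coeff_nonzero_imp_mixed_order[OF mixed]
  have bounds: "k < n" "s < n" "D - 1 < n" "j - s < n" "1 < n" using assms(1) k j D by auto
  have F3: "1 \<le> m" "1 \<le> m' \<Longrightarrow> D \<le> m + m'"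
    using constraints[OF F(3) assms(2,3) bounds(5)] by auto
  have F1: "s = 0 \<Longrightarrow> m \<le> k" "1 \<le> s \<Longrightarrow> D + m \<le> k + s + 1"
    using constraints[OF F(1) bounds(1,2) assms(2)] by auto
  have F2: "1 \<le> m'" "s = j \<Longrightarrow> m' \<le> D - 1" "s < j \<Longrightarrow> D + m' \<le> D + (j - s)"
    using constraints[OF F(2) bounds(3,4) assms(3)] k j D by auto
  show ?thesis
  proof (cases "s = 0")
    case True
    then have "m = k" "m' = j" using F1 F2 F3 j D(1) by linarith+
    then show ?thesis using True by simp
  next
    case False
    then have "s = j" "m = 1" using F1 F3 assms(1) D(1) by linarith+
    then have "m' = D - 1" using F2 F3 by linarith
    then show ?thesis using \<open>s = j\<close> \<open>m = 1\<close> by simp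
  qed
qed

lemma cycle_mixed_lhs:
  "(\<Sum>(s, m, m')\<in>{..j} \<times> {..<n} \<times> {..<n}. p k s m * p (D - 1) (j - s) m' * p m m' 1) =
    p k j 1 * p 1 (D - 1) 1 + of_nat j * p k j 1 ^ 2"
proof -
  have "(\<Sum>(s, m, m')\<in>{..j} \<times> {..<n} \<times> {..<n}. p k s m * p (D - 1) (j - s) m' * p m m' 1) =
      (\<Sum>(s, m, m')\<in>{(j, 1, D - 1), (0, k, j)}. p k s m * p (D - 1) (j - s) m' * p m m' 1)"
    by (rule sum_prod3_eq_sum_over_support) (use cycle_mixed_lhs_support k j D in auto)
  also have "\<dots> = p k j 1 * p 1 (D - 1) 1 + of_nat j * p k j 1 ^ 2"
  proof -
    have "D - 1 + 1 - j = k" using k j D by simp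
    then have "p (D - 1) j j = of_nat j * p k j 1"
      using coeff_mixed_leading[OF mixed, of j "D - 1" j] k j D by simp
    then show ?thesis using coeff_diag k j D by (simp add: power2_eq_square)
  qed
  finally show ?thesis .
qed

lemma cycle_mixed_rhs_support:
  assumes "s \<le> D - 1" "m < n" "m' < n"
    and F: "p k (D - 1 - s) m \<noteq> 0" "p j s m' \<noteq> 0" "p m m' 1 \<noteq> 0"
  shows "(s, m, m') \<in> {(D - 1, k, j), (0, k, j)}"
proof -
  note constraints = coeff_nonzero_imp_mixed_order[OF mixed]
  have bounds: "k < n" "D - 1 - s < n" "j < n" "s < n" "1 < n" using assms(1) k j D by auto
  have F3: "1 \<le> m" "1 \<le> m' \<Longrightarrow> D \<le> m + m'"
    using constraints[OF F(3) assms(2,3) bounds(5)] by auto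
  have F1: "s = D - 1 \<Longrightarrow> m \<le> k" "s < D - 1 \<Longrightarrow> D + m \<le> k + (D - 1 - s) + 1"
    using constraints[OF F(1) bounds(1,2) assms(2)] assms(1) by auto
  have F2: "1 \<le> m'" "s = 0 \<Longrightarrow> m' \<le> j" "1 \<le> s \<Longrightarrow> D + m' \<le> j + s + 1"
    using constraints[OF F(2) bounds(3,4) assms(3)] j by auto
  have s: "s = 0 \<or> s = D - 1" using F1 F2 F3 assms(1) D(1) by linarith
  have "m \<le> k \<and> m' \<le> j"
  proof (cases "s = 0")
    case True
    then show ?thesis using F1(2) F2(2) k j D(1) by simp
  next
    case False
    then show ?thesis using s F1(1) F2(3) j D(1) by simp
  qed
  then have "m = k" "m' = j" using F2(1) F3 D(1) by linarith+
  then show ?thesis using s by auto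
qed

lemma cycle_mixed_rhs:
  "(\<Sum>(s, m, m')\<in>{..D - 1} \<times> {..<n} \<times> {..<n}. p k (D - 1 - s) m * p j s m' * p m m' 1) =
    of_nat j * p 1 (D - 1) 1 * p k j 1 + of_nat k * p 1 (D - 1) 1 * p k j 1"
proof -
  have "(\<Sum>(s, m, m')\<in>{..D - 1} \<times> {..<n} \<times> {..<n}. p k (D - 1 - s) m * p j s m' * p m m' 1) =
      (\<Sum>(s, m, m')\<in>{(D - 1, k, j), (0, k, j)}. p k (D - 1 - s) m * p j s m' * p m m' 1)"
    by (rule sum_prod3_eq_sum_over_support) (use cycle_mixed_rhs_support k j D in auto)
  also have "\<dots> = of_nat j * p 1 (D - 1) 1 * p k j 1 + of_nat k * p 1 (D - 1) 1 * p k j 1"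
  proof -
    have "p j (D - 1) j = of_nat j * p 1 (D - 1) 1"
      using coeff_mixed_leading[OF mixed, of "D - 1" j j] k j D by simp
    moreover have "p k (D - 1) k = of_nat k * p 1 (D - 1) 1"
      using coeff_mixed_leading[OF mixed, of "D - 1" k k] k j D by simp
    ultimately show ?thesis using coeff_diag k j D by simp
  qed
  finally show ?thesis .
qed

lemma cycle_mixed_identity:
  "p k j 1 * p 1 (D - 1) 1 + of_nat j * p k j 1 ^ 2 = of_nat D * p 1 (D - 1) 1 * p k j 1"
proof -
  have "p k j 1 * p 1 (D - 1) 1 + of_nat j * p k j 1 ^ 2 =
      of_nat j * p 1 (D - 1) 1 * p k j 1 + of_nat k * p 1 (D - 1) 1 * p k j 1"
    using cycle_identity[of k j "D - 1"] cycle_mixed_lhs cycle_mixed_rhs k j D by simp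
  also have "\<dots> = of_nat (k + j) * p 1 (D - 1) 1 * p k j 1" by (simp add: algebra_simps)
  also have "\<dots> = of_nat D * p 1 (D - 1) 1 * p k j 1" using D(1) by simp
  finally show ?thesis .
qed

end

context
  fixes v0 r :: nat
  assumes mixed: "mixed_order_ge (v0 + 1)" and v0: "1 \<le> v0" "v0 < n" and r: "2 \<le> r" "r < n"
    and below_r: "\<And>k. 1 < k \<Longrightarrow> k < r \<Longrightarrow> k < n \<Longrightarrow> p k 0 1 = 0"
begin

lemma x_coeff_nonzero_imp_below_r: "p i 0 m \<noteq> 0 \<Longrightarrow> i < n \<Longrightarrow> m < n \<Longrightarrow> i = m \<or> m + r \<le> i + 1"
  by (rule x_coeff_nonzero_imp) (use r below_r in auto)

lemma cycle_x_lhs_support: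
  assumes "m < n" "m' < n" and F: "p r 0 m \<noteq> 0" "p v0 0 m' \<noteq> 0" "p m m' 1 \<noteq> 0"
  shows "(0, m, m') \<in> {(0, 1, v0), (0, r, v0), (0, r, v0 + 1 - r)}"
proof -
  note constraints = coeff_nonzero_imp_mixed_order[OF mixed]
  have "1 < n" using two_le_n by simp
  have "m = 1 \<or> m = r"
    using constraints[OF F(1) r(2) _ assms(1)] x_coeff_nonzero_imp_below_r[OF F(1) r(2) assms(1)] r
    by auto
  moreover have "1 \<le> m'" "m' = v0 \<or> m' + r \<le> v0 + 1"
    using constraints[OF F(2) v0(2) _ assms(2)] x_coeff_nonzero_imp_below_r[OF F(2) v0(2) assms(2)] v0
    by auto
  moreover have "v0 + 1 \<le> m + m'"
    using constraints[OF F(3) assms(1,2) \<open>1 < n\<close>] \<open>1 \<le> m'\<close> by simp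
  ultimately show ?thesis using r by auto
qed

lemma cycle_x_lhs:
  "(\<Sum>(s, m, m')\<in>{..0} \<times> {..<n} \<times> {..<n}. p r s m * p v0 (0 - s) m' * p m m' 1) =
    p r 0 1 * p 1 v0 1 + p r v0 1 + of_nat (v0 + 1 - r) * p r 0 1 * p r (v0 + 1 - r) 1"
proof -
  define s where "s = v0 + 1 - r"
  have "s < v0" "s < n" using v0 r by (auto simp: s_def)
  have "(\<Sum>(s, m, m')\<in>{..0} \<times> {..<n} \<times> {..<n}. p r s m * p v0 (0 - s) m' * p m m' 1) =
      (\<Sum>(s, m, m')\<in>{(0, 1, v0), (0, r, v0), (0, r, s)}. p r s m * p v0 (0 - s) m' * p m m' 1)"
    unfolding s_def
    by (rule sum_prod3_eq_sum_over_support) (use cycle_x_lhs_support v0 r two_le_n in auto)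
  also have "\<dots> = p r 0 1 * p 1 v0 1 + p r v0 1 + of_nat s * p r 0 1 * p r s 1"
  proof -
    have "p v0 0 s = of_nat s * p r 0 1"
    proof (cases "s = 0")
      case True
      then show ?thesis using coeff_0 v0 by simp
    next
      case False
      then show ?thesis using x_coeff_leading[OF r(1) below_r, of v0 s] v0 \<open>s < n\<close> by (simp add: s_def)
    qed
    moreover have "s \<noteq> v0" using \<open>s < v0\<close> by simp
    ultimately show ?thesis using coeff_diag v0 r by simp
  qed
  finally show ?thesis by (simp add: s_def)
qed

lemma cycle_x_rhs_support:
  assumes "s \<le> v0" "m < n" "m' < n" and F: "p r (v0 - s) m \<noteq> 0" "p 0 s m' \<noteq> 0" "p m m' 1 \<noteq> 0"
  shows "(s, m, m') \<in> {(0, 1, 0), (0, r, 0)}"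
proof -
  note constraints = coeff_nonzero_imp_mixed_order[OF mixed]
  have "s < n" "1 < n" using assms(1) v0 two_le_n by auto
  have "s = 0" "m' = 0"
    using constraints[OF F(2) _ \<open>s < n\<close> assms(3)] two_le_n by auto
  then have "m \<le> r"
    using constraints[OF F(1) r(2) _ assms(2)] v0 by simp
  moreover have "m = 1 \<or> r \<le> m"
  proof -
    have "p m 0 1 \<noteq> 0" using F(3) \<open>m' = 0\<close> by simp
    then show ?thesis
      using constraints[OF _ assms(2) _ \<open>1 < n\<close>] x_coeff_nonzero_imp_below_r[OF _ assms(2) \<open>1 < n\<close>]
      by fastforce
  qed
  ultimately show ?thesis using \<open>s = 0\<close> \<open>m' = 0\<close> by auto
qed

lemma cycle_x_rhs:
  "(\<Sum>(s, m, m')\<in>{..v0} \<times> {..<n} \<times> {..<n}. p r (v0 - s) m * p 0 s m' * p m m' 1) =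
    p r v0 1 + of_nat r * p 1 v0 1 * p r 0 1"
proof -
  have "(\<Sum>(s, m, m')\<in>{..v0} \<times> {..<n} \<times> {..<n}. p r (v0 - s) m * p 0 s m' * p m m' 1) =
      (\<Sum>(s, m, m')\<in>{(0, 1, 0), (0, r, 0)}. p r (v0 - s) m * p 0 s m' * p m m' 1)"
    by (rule sum_prod3_eq_sum_over_support) (use cycle_x_rhs_support r two_le_n in auto)
  also have "\<dots> = p r v0 1 + of_nat r * p 1 v0 1 * p r 0 1"
  proof -
    have "p r v0 r = of_nat r * p 1 v0 1"
      using coeff_mixed_leading[OF mixed, of v0 r r] v0 r by simp
    then show ?thesis using coeff_0 x_coeff_1 r two_le_n by simp
  qed
  finally show ?thesis .
qed

lemma cycle_x_identity:
  "p r 0 1 * p 1 v0 1 + of_nat (v0 + 1 - r) * p r 0 1 * p r (v0 + 1 - r) 1 =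
    of_nat r * p 1 v0 1 * p r 0 1"
  using cycle_identity[of r 0 v0] cycle_x_lhs cycle_x_rhs v0 r by simp

end

lemma mixed_order_ge_if_xy_coeffs_vanish:
  assumes "v0 < n" and xy: "\<And>i. 0 < i \<Longrightarrow> i < v0 \<Longrightarrow> p 1 i 1 = 0"
  shows "mixed_order_ge (v0 + 1)"
proof -
  have "p x y 1 = 0" if "1 \<le> x" "1 \<le> y" "x + y \<le> v0" for x y
    using that
  proof (induction "x + y" arbitrary: x y rule: less_induct)
    case less
    show ?case
    proof (cases "x = 1")
      case True
      then show ?thesis using xy[of y] less.prems by simp
    next
      case False
      have "mixed_order_ge (x + y)" unfolding mixed_order_ge_def using less by auto
      moreover have "x + y \<le> n" using less.prems assms(1) by simp
      ultimately have "p x y 1 * p 1 (x + y - 1) 1 + of_nat y * p x y 1 ^ 2 =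
          of_nat (x + y) * p 1 (x + y - 1) 1 * p x y 1"
        using cycle_mixed_identity less.prems(1,2) by blast
      moreover have "p 1 (x + y - 1) 1 = 0" using xy less.prems False by simp
      ultimately show ?thesis using less.prems(2) by simp
    qed
  qed
  then show ?thesis unfolding mixed_order_ge_def by auto
qed

context
  fixes v0 :: nat
  assumes v0: "1 < v0" "v0 < n"
    and xy: "\<And>i. 0 < i \<Longrightarrow> i < v0 \<Longrightarrow> p 1 i 1 = 0" and xy_v0: "p 1 v0 1 \<noteq> 0"
begin

lemma x_coeff_eq_0:
  assumes r: "2 \<le> r" "r < n" and below_r: "\<And>k. 1 < k \<Longrightarrow> k < r \<Longrightarrow> k < n \<Longrightarrow> p k 0 1 = 0"
  shows "p r 0 1 = 0"
proof (rule ccontr)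
  assume "p r 0 1 \<noteq> 0"
  define s where "s = v0 + 1 - r"
  have mixed: "mixed_order_ge (v0 + 1)" using mixed_order_ge_if_xy_coeffs_vanish v0 xy by blast
  have "p r 0 1 * (p 1 v0 1 + of_nat s * p r s 1 - of_nat r * p 1 v0 1) = 0"
    using cycle_x_identity[OF mixed _ v0(2) r below_r] v0 unfolding s_def by (simp add: algebra_simps)
  then have x_eq: "p 1 v0 1 + of_nat s * p r s 1 = of_nat r * p 1 v0 1"
    using \<open>p r 0 1 \<noteq> 0\<close> by simp
  have "of_nat r * p 1 v0 1 \<noteq> p 1 v0 1" using xy_v0 r(1) by simp
  then have "of_nat s * p r s 1 \<noteq> 0" using x_eq by force
  then have "s \<noteq> 0" "p r s 1 \<noteq> 0" by auto
  then have "1 \<le> s" "r + s = v0 + 1" by (auto simp: s_def)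
  then have "p r s 1 * (p 1 v0 1 + of_nat s * p r s 1 - of_nat (v0 + 1) * p 1 v0 1) = 0"
    using cycle_mixed_identity[OF mixed _ \<open>1 \<le> s\<close>, of r] r v0
    by (simp add: algebra_simps power2_eq_square)
  then have "p 1 v0 1 + of_nat s * p r s 1 = of_nat (v0 + 1) * p 1 v0 1"
    using \<open>p r s 1 \<noteq> 0\<close> by simp
  then have "of_nat r * p 1 v0 1 = of_nat (v0 + 1) * p 1 v0 1" using x_eq by metis
  then have "(of_nat r :: 'a) = of_nat (v0 + 1)" using xy_v0 by simp
  then have "r = v0 + 1" by (simp only: of_nat_eq_iff)
  then show False using \<open>s \<noteq> 0\<close> by (simp add: s_def)
qed

lemma x_coeffs_eq_0: "1 < k \<Longrightarrow> k < n \<Longrightarrow> p k 0 1 = 0"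
proof (induction k rule: less_induct)
  case (less k)
  then show ?case using x_coeff_eq_0[of k] by simp
qed

end

end

lemma regular_q_cycle_coalg_identity:
  assumes "regular_q_cycle_coalg n p p" "i < n" "j < n" "l < n" "k < n"
  shows "(\<Sum>(s, m, m')\<in>{..j} \<times> {..<n} \<times> {..<n}. p i s m * p l (j - s) m' * p m m' k) =
    (\<Sum>(s, m, m')\<in>{..l} \<times> {..<n} \<times> {..<n}. p i (l - s) m * p j s m' * p m m' k)"
  using assms unfolding regular_q_cycle_coalg_def by (simp add: sum.cartesian_product)

theorem proposition5p2:
  fixes p :: "nat \<Rightarrow> nat \<Rightarrow> nat \<Rightarrow> 'a::field_char_0"
    and n v0 :: nat
  assumes "alg_closed_type TYPE('a)"
    and "n \<ge> 2"
    and "1 < v0" and "v0 < n"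
    and "regular_q_cycle_coalg n p p"
    and "p 1 0 1 = 1"
    and "\<forall>i. 0 < i \<and> i < v0 \<longrightarrow> p 1 i 1 = 0"
    and "p 1 v0 1 \<noteq> 0"
  shows "\<forall>j<n. \<forall>k<n. p j 0 k = kdelta k j"
proof -
  have "coalg_morph2 n p"
    using assms(5) unfolding regular_q_cycle_coalg_def regular_q_magma_coalg_def by blast
  then interpret q_cycle_coeffs p n
    by unfold_locales (use assms(2,6) regular_q_cycle_coalg_identity[OF assms(5)] in auto)
  have "p k 0 1 = 0" if "1 < k" "k < n" for k
    using x_coeffs_eq_0[of v0 k] assms(3,4,7,8) that by auto
  then show ?thesis using x_coeffs_trivial unfolding kdelta_def by auto
qed

end
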